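(* Let $\{R_i\}_{i}$ be an arbitrary family of avoidance rings and $R=\prod_i R_i$. Then $R$ is an avoidance ring if and only if $R/I$ is an avoidance ring, where $I=\bigoplus_i R_i\subseteq R$ is the ideal of elements with only finitely many nonzero coordinates.
   Context: All rings are commutative with $1\neq 0$. An ideal $I$ of a ring $R$ has avoidance if whenever $I_1,\ldots,I_n$ are finitely many ideals of $R$ with $I\subseteq\bigcup_{k=1}^n I_k$, then $I\subseteq I_k$ for some $k$. A ring is an avoidance ring if every ideal of it has avoidance. *)

theory Defs
  imports "HOL-Algebra.QuotRing"
begin

definition has_avoidance :: "('a, 'b) ring_scheme \<Rightarrow> 'a set \<Rightarrow> bool" where
  "has_avoidance R J \<longleftrightarrow>
     (\<forall>S. finite S \<longrightarrow> (\<forall>K\<in>S. ideal K R) \<longrightarrow> J \<subseteq> \<Union>S \<longrightarrow> (\<exists>K\<in>S. J \<subseteq> K))"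

definition avoidance_ring :: "('a, 'b) ring_scheme \<Rightarrow> bool" where
  "avoidance_ring R \<longleftrightarrow> (\<forall>J. ideal J R \<longrightarrow> has_avoidance R J)"

definition prod_ring :: "'i set \<Rightarrow> ('i \<Rightarrow> ('a, 'b) ring_scheme) \<Rightarrow> ('i \<Rightarrow> 'a) ring" where
  "prod_ring Idx R =
     \<lparr> carrier = (\<Pi>\<^sub>E i\<in>Idx. carrier (R i)),
       mult = (\<lambda>f g. restrict (\<lambda>i. f i \<otimes>\<^bsub>R i\<^esub> g i) Idx),
       one = restrict (\<lambda>i. \<one>\<^bsub>R i\<^esub>) Idx,
       zero = restrict (\<lambda>i. \<zero>\<^bsub>R i\<^esub>) Idx,
       add = (\<lambda>f g. restrict (\<lambda>i. f i \<oplus>\<^bsub>R i\<^esub> g i) Idx) \<rparr>"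

definition direct_sum_ideal :: "'i set \<Rightarrow> ('i \<Rightarrow> ('a, 'b) ring_scheme) \<Rightarrow> ('i \<Rightarrow> 'a) set" where
  "direct_sum_ideal Idx R =
     {f \<in> carrier (prod_ring Idx R). finite {i \<in> Idx. f i \<noteq> \<zero>\<^bsub>R i\<^esub>}}"

end

theory Submission
  imports Defs
begin

text \<open>
  A quotient of an avoidance ring is an avoidance ring, which gives one direction. Conversely,
  let an ideal J of the product be covered by finitely many ideals. Multiplying by the idempotent
  supported on a finite set F of coordinates, the projection J_F of J is contained in one of the
  covering ideals: this is an induction on F, using avoidance in each factor for a single
  coordinate and, to glue two disjoint coordinate sets A and B, the fact that for j, j' in J
  the element e_A j + e_B j' lies in J. The set of covering ideals containing J_F shrinks as F
  grows, so it stabilises at some finite F0. The same gluing argument puts every e_(-F0) j in one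
  of these stable ideals, so J is covered modulo the direct sum by them, and avoidance in the
  quotient yields a stable ideal K with J contained in K + direct sum. Since K contains every
  finite projection of J, the finitely supported correction lies in K, hence J is contained in K.
\<close>

lemma has_avoidanceI:
  assumes "\<And>S. finite S \<Longrightarrow> \<forall>K\<in>S. ideal K R \<Longrightarrow> J \<subseteq> \<Union>S \<Longrightarrow> \<exists>K\<in>S. J \<subseteq> K"
  shows "has_avoidance R J"
  using assms unfolding has_avoidance_def by blast

lemma has_avoidanceE:
  assumes "has_avoidance R J" "finite S" "\<forall>K\<in>S. ideal K R" "J \<subseteq> \<Union>S"
  obtains K where "K \<in> S" "J \<subseteq> K"
  using assms unfolding has_avoidance_def by blast

lemma avoidance_ringD: "avoidance_ring R \<Longrightarrow> ideal J R \<Longrightarrow> has_avoidance R J"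
  unfolding avoidance_ring_def by blast

lemma (in cring) cring_idealI:
  assumes "I \<subseteq> carrier R" "\<zero> \<in> I" "\<And>a b. a \<in> I \<Longrightarrow> b \<in> I \<Longrightarrow> a \<oplus> b \<in> I"
    and "\<And>a x. a \<in> I \<Longrightarrow> x \<in> carrier R \<Longrightarrow> x \<otimes> a \<in> I"
  shows "ideal I R"
proof (rule idealI[OF ring_axioms])
  show "subgroup I (add_monoid R)"
  proof (rule add.subgroupI)
    fix a assume a: "a \<in> I"
    then have "\<ominus> \<one> \<otimes> a \<in> I" using assms(4) by simp
    then show "\<ominus> a \<in> I" using a assms(1) by (auto simp: l_minus)
  qed (use assms in auto)
qed (use assms in \<open>auto, metis m_comm subsetD\<close>)

lemma (in ring) mem_set_add_iff_rcos:
  assumes I: "ideal I R" and K: "ideal K R" and x: "x \<in> carrier R"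
  shows "x \<in> K <+>\<^bsub>R\<^esub> I \<longleftrightarrow> I +> x \<in> (+>) I ` K"
proof -
  have Ic: "I \<subseteq> carrier R" and Kc: "K \<subseteq> carrier R"
    using I K by (simp_all add: ideal.Icarr subsetI)
  have "(+>) I ` K \<subseteq> carrier (R Quot I)"
    using ideal.Icarr[OF ring_ideal_imp_quot_ideal[OF I K]] by blast
  then have "x \<in> \<Union>((+>) I ` K) \<longleftrightarrow> I +> x \<in> (+>) I ` K"
    by (rule canonical_proj_vimage_mem_iff[OF I _ x])
  moreover have "\<Union>((+>) I ` K) = I <+>\<^bsub>R\<^esub> K"
    unfolding a_r_coset_def' set_add_def' by blast
  ultimately show ?thesis using set_add_comm[OF Ic Kc] by simp
qed

lemma (in ring) avoidance_modulo_ideal: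
  assumes I: "ideal I R" and avQ: "avoidance_ring (R Quot I)" and J: "ideal J R"
    and S: "finite S" "\<forall>K\<in>S. ideal K R" and cover: "J \<subseteq> (\<Union>K\<in>S. K <+>\<^bsub>R\<^esub> I)"
  shows "\<exists>K\<in>S. J \<subseteq> K <+>\<^bsub>R\<^esub> I"
proof -
  have Jc: "J \<subseteq> carrier R" using J by (simp add: ideal.Icarr subsetI)
  have "has_avoidance (R Quot I) ((+>) I ` J)"
    using avoidance_ringD[OF avQ ring_ideal_imp_quot_ideal[OF I J]] .
  moreover have "finite ((`) ((+>) I) ` S)" using S(1) by simp
  moreover have "\<forall>K'\<in>(`) ((+>) I) ` S. ideal K' (R Quot I)"
    using S(2) ring_ideal_imp_quot_ideal[OF I] by blast
  moreover have "(+>) I ` J \<subseteq> \<Union>((`) ((+>) I) ` S)"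
  proof
    fix X assume "X \<in> (+>) I ` J"
    then obtain x where x: "x \<in> J" "X = I +> x" by blast
    then obtain K where K: "K \<in> S" "x \<in> K <+>\<^bsub>R\<^esub> I" using cover by blast
    then have "X \<in> (+>) I ` K"
      using x mem_set_add_iff_rcos[OF I _ subsetD[OF Jc x(1)]] S(2) by simp
    then show "X \<in> \<Union>((`) ((+>) I) ` S)" using K(1) by blast
  qed
  ultimately obtain K' where "K' \<in> (`) ((+>) I) ` S" "(+>) I ` J \<subseteq> K'"
    by (rule has_avoidanceE)
  then obtain K where K: "K \<in> S" "(+>) I ` J \<subseteq> (+>) I ` K" by blast
  have "J \<subseteq> K <+>\<^bsub>R\<^esub> I"
  proof
    fix x assume x: "x \<in> J"
    then have "I +> x \<in> (+>) I ` K" using K(2) by blast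
    then show "x \<in> K <+>\<^bsub>R\<^esub> I"
      using mem_set_add_iff_rcos[OF I _ subsetD[OF Jc x]] S(2) K(1) by simp
  qed
  with K(1) show ?thesis ..
qed

lemma avoidance_ring_Quot:
  fixes A (structure)
  assumes A: "ring A" and I: "ideal I A" and av: "avoidance_ring A"
  shows "avoidance_ring (A Quot I)"
  unfolding avoidance_ring_def
proof (intro allI impI has_avoidanceI)
  fix J' S' assume J': "ideal J' (A Quot I)" and S'f: "finite S'"
    and S'i: "\<forall>K'\<in>S'. ideal K' (A Quot I)" and cover: "J' \<subseteq> \<Union>S'"
  interpret A: ring A by (rule A)
  have carr: "K' \<subseteq> carrier (A Quot I)" if "ideal K' (A Quot I)" for K'
    using that by (simp add: ideal.Icarr subsetI)
  have mem_iff: "x \<in> \<Union>K' \<longleftrightarrow> I +> x \<in> K'" if "ideal K' (A Quot I)" "x \<in> carrier A" for K' x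
    using A.canonical_proj_vimage_mem_iff[OF I carr] that by blast
  have "has_avoidance A (\<Union>J')"
    using avoidance_ringD[OF av A.quot_ideal_imp_ring_ideal[OF I J']] .
  moreover have "finite (Union ` S')" using S'f by simp
  moreover have "\<forall>K\<in>Union ` S'. ideal K A"
    using S'i A.quot_ideal_imp_ring_ideal[OF I] by blast
  moreover have "\<Union>J' \<subseteq> \<Union>(Union ` S')"
  proof
    fix x assume x: "x \<in> \<Union>J'"
    then have xc: "x \<in> carrier A" using A.canonical_proj_vimage_in_carrier[OF I carr[OF J']] by blast
    then obtain K' where K': "K' \<in> S'" "I +> x \<in> K'" using x cover mem_iff[OF J' xc] by blast
    then have "x \<in> \<Union>K'" using mem_iff[OF _ xc] S'i by blast
    then show "x \<in> \<Union>(Union ` S')" using K'(1) by blast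
  qed
  ultimately obtain K where "K \<in> Union ` S'" "\<Union>J' \<subseteq> K" by (rule has_avoidanceE)
  then obtain K' where K': "K' \<in> S'" "\<Union>J' \<subseteq> \<Union>K'" by blast
  have "J' \<subseteq> K'"
  proof
    fix X assume X: "X \<in> J'"
    then obtain r where r: "r \<in> carrier A" "X = I +> r"
      using carr[OF J'] unfolding FactRing_def A_RCOSETS_def'[of A I] by auto
    then have "r \<in> \<Union>K'" using X K'(2) mem_iff[OF J' r(1)] by blast
    then show "X \<in> K'" using r K'(1) mem_iff[OF _ r(1)] S'i by blast
  qed
  with K'(1) show "\<exists>K'\<in>S'. J' \<subseteq> K'" ..
qed

lemma prod_ring_simps:
  "carrier (prod_ring Idx R) = (\<Pi>\<^sub>E i\<in>Idx. carrier (R i))"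
  "x \<otimes>\<^bsub>prod_ring Idx R\<^esub> y = restrict (\<lambda>i. x i \<otimes>\<^bsub>R i\<^esub> y i) Idx"
  "x \<oplus>\<^bsub>prod_ring Idx R\<^esub> y = restrict (\<lambda>i. x i \<oplus>\<^bsub>R i\<^esub> y i) Idx"
  "\<one>\<^bsub>prod_ring Idx R\<^esub> = restrict (\<lambda>i. \<one>\<^bsub>R i\<^esub>) Idx"
  "\<zero>\<^bsub>prod_ring Idx R\<^esub> = restrict (\<lambda>i. \<zero>\<^bsub>R i\<^esub>) Idx"
  by (simp_all add: prod_ring_def)

lemma cring_prod_ring:
  assumes "\<And>i. i \<in> Idx \<Longrightarrow> cring (R i)"
  shows "cring (prod_ring Idx R)"
proof -
  have R: "ring (R i)" "comm_monoid (R i)" if "i \<in> Idx" for i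
    using assms[OF that] cring.axioms by auto
  note simps = prod_ring_simps PiE_iff fun_eq_iff extensional_def
    ring.ring_simprules[OF R(1)] comm_monoid.m_comm[OF R(2)] comm_monoid.m_lcomm[OF R(2)]
    monoid.r_one[OF ring.is_monoid[OF R(1)]]
  show ?thesis
  proof (intro cringI abelian_groupI comm_monoidI)
    fix x assume "x \<in> carrier (prod_ring Idx R)"
    then show "\<exists>y\<in>carrier (prod_ring Idx R). y \<oplus>\<^bsub>prod_ring Idx R\<^esub> x = \<zero>\<^bsub>prod_ring Idx R\<^esub>"
      by (intro bexI[of _ "restrict (\<lambda>i. \<ominus>\<^bsub>R i\<^esub> x i) Idx"]) (auto simp: simps)
  qed (auto simp: simps)
qed

lemma finite_sets_antimono_stabilize:
  fixes T :: "'x set \<Rightarrow> 'y set"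
  assumes S: "finite S" and T: "\<And>F. T F \<subseteq> S" and anti: "\<And>F G. F \<subseteq> G \<Longrightarrow> T G \<subseteq> T F"
  shows "\<exists>F0. finite F0 \<and> (\<forall>F. finite F \<longrightarrow> T F0 \<subseteq> T F)"
proof -
  obtain F0 where F0: "finite F0" and least: "\<And>G. finite G \<Longrightarrow> card (T F0) \<le> card (T G)"
    using ex_has_least_nat[of finite "{}" "\<lambda>F. card (T F)"] by auto
  have "T F0 \<subseteq> T F" if F: "finite F" for F
  proof -
    have "T (F \<union> F0) \<subseteq> T F0" by (rule anti) blast
    moreover have "card (T F0) \<le> card (T (F \<union> F0))" using least F F0 by simp
    ultimately have "T (F \<union> F0) = T F0" using finite_subset[OF T S] by (meson card_seteq)
    then show ?thesis using anti[of F "F \<union> F0"] by blast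
  qed
  with F0 show ?thesis by blast
qed

locale cring_family =
  fixes Idx :: "'i set" and R :: "'i \<Rightarrow> ('a, 'b) ring_scheme"
  assumes cring: "\<And>i. i \<in> Idx \<Longrightarrow> cring (R i)"
begin

abbreviation P :: "('i \<Rightarrow> 'a) ring" where "P \<equiv> prod_ring Idx R"

abbreviation D :: "('i \<Rightarrow> 'a) set" where "D \<equiv> direct_sum_ideal Idx R"

sublocale P: cring P by (rule cring_prod_ring[OF cring])

lemma ring_factor: "i \<in> Idx \<Longrightarrow> ring (R i)"
  using cring cring.axioms(1) by blast

lemmas coord_simps =
  prod_ring_simps PiE_iff fun_eq_iff extensional_def ring.ring_simprules[OF ring_factor]

definition idem :: "'i set \<Rightarrow> 'i \<Rightarrow> 'a" where
  "idem F = restrict (\<lambda>i. if i \<in> F then \<one>\<^bsub>R i\<^esub> else \<zero>\<^bsub>R i\<^esub>) Idx"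

definition proj :: "'i set \<Rightarrow> ('i \<Rightarrow> 'a) \<Rightarrow> 'i \<Rightarrow> 'a" where
  "proj F x = restrict (\<lambda>i. if i \<in> F then x i else \<zero>\<^bsub>R i\<^esub>) Idx"

lemma idem_carrier: "idem F \<in> carrier P"
  by (auto simp: idem_def coord_simps)

lemma proj_eq_idem_mult: "x \<in> carrier P \<Longrightarrow> proj F x = idem F \<otimes>\<^bsub>P\<^esub> x"
  by (auto simp: idem_def proj_def coord_simps)

lemma proj_carrier: "x \<in> carrier P \<Longrightarrow> proj F x \<in> carrier P"
  by (simp add: proj_eq_idem_mult idem_carrier)

lemma proj_in_ideal:
  assumes "ideal K P" "x \<in> K"
  shows "proj F x \<in> K"
  using ideal.I_l_closed[OF assms idem_carrier] proj_eq_idem_mult[OF ideal.Icarr[OF assms]] by simp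

lemma proj_add:
  "x \<in> carrier P \<Longrightarrow> y \<in> carrier P \<Longrightarrow> proj F (x \<oplus>\<^bsub>P\<^esub> y) = proj F x \<oplus>\<^bsub>P\<^esub> proj F y"
  by (simp add: proj_eq_idem_mult idem_carrier P.r_distr)

lemma proj_proj: "proj F (proj G x) = proj (F \<inter> G) x"
  by (auto simp: proj_def)

lemma proj_image_antimono:
  assumes FG: "F \<subseteq> G" and K: "ideal K P" and JG: "proj G ` J \<subseteq> K"
  shows "proj F ` J \<subseteq> K"
proof
  fix y assume "y \<in> proj F ` J"
  then obtain j where j: "j \<in> J" "y = proj F j" by blast
  have "y = proj F (proj G j)" using FG j(2) by (simp add: proj_proj Int_absorb2)
  moreover have "proj G j \<in> K" using JG j(1) by blast
  ultimately show "y \<in> K" using proj_in_ideal[OF K] by simp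
qed

lemma proj_empty: "proj {} x = \<zero>\<^bsub>P\<^esub>"
  by (simp add: proj_def prod_ring_simps)

lemma proj_UNIV: "x \<in> carrier P \<Longrightarrow> proj UNIV x = x"
  by (auto simp: proj_def coord_simps)

lemma proj_Un:
  "x \<in> carrier P \<Longrightarrow> F \<inter> G = {} \<Longrightarrow> proj (F \<union> G) x = proj F x \<oplus>\<^bsub>P\<^esub> proj G x"
  by (auto simp: proj_def coord_simps)

lemma proj_insert_outside: "i \<notin> Idx \<Longrightarrow> proj (insert i F) x = proj F x"
  by (auto simp: proj_def)

lemma ideal_direct_sum: "ideal D P"
proof (rule P.cring_idealI)
  fix a b assume "a \<in> D" "b \<in> D"
  moreover have "{i \<in> Idx. (a \<oplus>\<^bsub>P\<^esub> b) i \<noteq> \<zero>\<^bsub>R i\<^esub>}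
      \<subseteq> {i \<in> Idx. a i \<noteq> \<zero>\<^bsub>R i\<^esub>} \<union> {i \<in> Idx. b i \<noteq> \<zero>\<^bsub>R i\<^esub>}"
    using calculation by (auto simp: direct_sum_ideal_def coord_simps)
  ultimately show "a \<oplus>\<^bsub>P\<^esub> b \<in> D"
    by (auto simp: direct_sum_ideal_def intro: finite_subset)
next
  fix a x assume "a \<in> D" "x \<in> carrier P"
  moreover have "{i \<in> Idx. (x \<otimes>\<^bsub>P\<^esub> a) i \<noteq> \<zero>\<^bsub>R i\<^esub>} \<subseteq> {i \<in> Idx. a i \<noteq> \<zero>\<^bsub>R i\<^esub>}"
    using \<open>a \<in> D\<close> \<open>x \<in> carrier P\<close> by (auto simp: direct_sum_ideal_def coord_simps)
  ultimately show "x \<otimes>\<^bsub>P\<^esub> a \<in> D"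
    by (auto simp: direct_sum_ideal_def intro: finite_subset)
qed (auto simp: direct_sum_ideal_def coord_simps)

lemma proj_finite_in_direct_sum: "finite F \<Longrightarrow> x \<in> carrier P \<Longrightarrow> proj F x \<in> D"
  using proj_carrier[of x F] by (auto simp: direct_sum_ideal_def proj_def intro: finite_subset[of _ F])

lemma proj_support: "y \<in> D \<Longrightarrow> proj {i \<in> Idx. y i \<noteq> \<zero>\<^bsub>R i\<^esub>} y = y"
  by (auto simp: direct_sum_ideal_def proj_def prod_ring_simps PiE_iff fun_eq_iff extensional_def)

lemma ideal_coord_image:
  assumes i: "i \<in> Idx" and J: "ideal J P"
  shows "ideal ((\<lambda>x. x i) ` J) (R i)"
proof (rule cring.cring_idealI[OF cring[OF i]])
  have Jc: "J \<subseteq> carrier P" using J by (simp add: ideal.Icarr subsetI)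
  then show "(\<lambda>x. x i) ` J \<subseteq> carrier (R i)" using i by (auto simp: prod_ring_simps)
  have "\<zero>\<^bsub>P\<^esub> \<in> J" using J by (simp add: additive_subgroup.zero_closed ideal.axioms(1))
  moreover have "\<zero>\<^bsub>P\<^esub> i = \<zero>\<^bsub>R i\<^esub>" using i by (simp add: prod_ring_simps)
  ultimately show "\<zero>\<^bsub>R i\<^esub> \<in> (\<lambda>x. x i) ` J" by (metis image_eqI)
next
  fix a b assume "a \<in> (\<lambda>x. x i) ` J" "b \<in> (\<lambda>x. x i) ` J"
  then obtain x y where "x \<in> J" "a = x i" "y \<in> J" "b = y i" by blast
  moreover have "x \<oplus>\<^bsub>P\<^esub> y \<in> J"
    using J \<open>x \<in> J\<close> \<open>y \<in> J\<close> by (simp add: additive_subgroup.a_closed ideal.axioms(1))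
  moreover have "(x \<oplus>\<^bsub>P\<^esub> y) i = x i \<oplus>\<^bsub>R i\<^esub> y i" using i by (simp add: prod_ring_simps)
  ultimately show "a \<oplus>\<^bsub>R i\<^esub> b \<in> (\<lambda>x. x i) ` J" by (metis image_eqI)
next
  fix a r assume "a \<in> (\<lambda>x. x i) ` J" and r: "r \<in> carrier (R i)"
  then obtain x where x: "x \<in> J" "a = x i" by blast
  define s where "s = restrict (\<lambda>k. if k = i then r else \<zero>\<^bsub>R k\<^esub>) Idx"
  have "s \<in> carrier P" using r by (auto simp: s_def coord_simps)
  then have "s \<otimes>\<^bsub>P\<^esub> x \<in> J" using J x(1) by (simp add: ideal.I_l_closed)
  moreover have "(s \<otimes>\<^bsub>P\<^esub> x) i = r \<otimes>\<^bsub>R i\<^esub> a" using i x(2) by (simp add: prod_ring_simps s_def)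
  ultimately show "r \<otimes>\<^bsub>R i\<^esub> a \<in> (\<lambda>x. x i) ` J" by (metis image_eqI)
qed

lemma proj_singleton_eq_iff: "proj {i} x = proj {i} y \<longleftrightarrow> i \<notin> Idx \<or> x i = y i"
  by (auto simp: proj_def fun_eq_iff)

lemma has_avoidance_proj_singleton:
  assumes i: "i \<in> Idx" and av: "avoidance_ring (R i)" and J: "ideal J P"
  shows "has_avoidance P (proj {i} ` J)"
proof (rule has_avoidanceI)
  fix S assume S: "finite S" "\<forall>K\<in>S. ideal K P" and cover: "proj {i} ` J \<subseteq> \<Union>S"
  let ?c = "\<lambda>K. (\<lambda>x. x i) ` K"
  have "has_avoidance (R i) (?c J)" using avoidance_ringD[OF av ideal_coord_image[OF i J]] .
  moreover have "finite (?c ` S)" using S(1) by simp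
  moreover have "\<forall>K'\<in>?c ` S. ideal K' (R i)" using S(2) ideal_coord_image[OF i] by blast
  moreover have "?c J \<subseteq> \<Union>(?c ` S)"
  proof
    fix a assume "a \<in> ?c J"
    then obtain x where x: "x \<in> J" "a = x i" by blast
    then obtain K where K: "K \<in> S" "proj {i} x \<in> K" using cover by blast
    moreover have "proj {i} x i = a" using i x(2) by (simp add: proj_def)
    ultimately show "a \<in> \<Union>(?c ` S)" by (metis UN_iff image_eqI)
  qed
  ultimately obtain K' where "K' \<in> ?c ` S" "?c J \<subseteq> K'" by (rule has_avoidanceE)
  then obtain K where K: "K \<in> S" "?c J \<subseteq> ?c K" by blast
  have "proj {i} ` J \<subseteq> K"
  proof
    fix z assume "z \<in> proj {i} ` J"
    then obtain x where x: "x \<in> J" "z = proj {i} x" by blast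
    then obtain k where "k \<in> K" "x i = k i" using K(2) by blast
    then show "z \<in> K"
      using x proj_in_ideal[of K k "{i}"] S(2) K(1) proj_singleton_eq_iff by metis
  qed
  with K(1) show "\<exists>K\<in>S. proj {i} ` J \<subseteq> K" ..
qed

lemma proj_mix_in_common_ideal:
  assumes J: "ideal J P" and j: "j \<in> J" "j' \<in> J" and AB: "A \<inter> B = {}"
    and S: "\<forall>K\<in>S. ideal K P" and cover: "proj (A \<union> B) ` J \<subseteq> \<Union>S"
  shows "\<exists>K\<in>S. proj A j \<in> K \<and> proj B j' \<in> K"
proof -
  have jc: "j \<in> carrier P" "j' \<in> carrier P" using j J by (simp_all add: ideal.Icarr)
  define z where "z = proj A j \<oplus>\<^bsub>P\<^esub> proj B j'"
  have "z \<in> J" unfolding z_def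
    using J j proj_in_ideal[OF J] by (simp add: additive_subgroup.a_closed ideal.axioms(1))
  have meets: "(A \<union> B) \<inter> A = A" "(A \<union> B) \<inter> B = B" "A \<inter> B = {}" "B \<inter> A = {}"
    using AB by blast+
  have proj_z: "proj (A \<union> B) z = z" "proj A z = proj A j" "proj B z = proj B j'"
    unfolding z_def using jc by (simp_all add: proj_add proj_carrier proj_proj proj_empty meets)
  then obtain K where K: "K \<in> S" "z \<in> K" using cover \<open>z \<in> J\<close> by (metis image_eqI subsetD UnionE)
  then show ?thesis using proj_in_ideal[of K z] S proj_z by metis
qed

lemma proj_cover_split:
  assumes J: "ideal J P" and AB: "A \<inter> B = {}" and avB: "has_avoidance P (proj B ` J)"
    and S: "finite S" "\<forall>K\<in>S. ideal K P" and cover: "proj (A \<union> B) ` J \<subseteq> \<Union>S"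
    and j: "j \<in> J"
  shows "\<exists>K\<in>S. proj A j \<in> K \<and> proj B ` J \<subseteq> K"
proof -
  define Sj where "Sj = {K \<in> S. proj A j \<in> K}"
  have "finite Sj" "\<forall>K\<in>Sj. ideal K P" unfolding Sj_def using S by simp_all
  moreover have "proj B ` J \<subseteq> \<Union>Sj"
  proof
    fix y assume "y \<in> proj B ` J"
    then obtain j' where j': "j' \<in> J" "y = proj B j'" by blast
    then obtain K where "K \<in> S" "proj A j \<in> K" "proj B j' \<in> K"
      using proj_mix_in_common_ideal[OF J j j'(1) AB S(2) cover] by blast
    then show "y \<in> \<Union>Sj" unfolding Sj_def using j' by blast
  qed
  ultimately obtain K where "K \<in> Sj" "proj B ` J \<subseteq> K" by (rule has_avoidanceE[OF avB])
  then show ?thesis unfolding Sj_def by blast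
qed

lemma has_avoidance_proj_Un:
  assumes J: "ideal J P" and AB: "A \<inter> B = {}"
    and avA: "has_avoidance P (proj A ` J)" and avB: "has_avoidance P (proj B ` J)"
  shows "has_avoidance P (proj (A \<union> B) ` J)"
proof (rule has_avoidanceI)
  fix S assume S: "finite S" "\<forall>K\<in>S. ideal K P" and cover: "proj (A \<union> B) ` J \<subseteq> \<Union>S"
  define SB where "SB = {K \<in> S. proj B ` J \<subseteq> K}"
  have "finite SB" "\<forall>K\<in>SB. ideal K P" unfolding SB_def using S by simp_all
  moreover have "proj A ` J \<subseteq> \<Union>SB"
    using proj_cover_split[OF J AB avB S cover] unfolding SB_def by blast
  ultimately obtain K where K: "K \<in> SB" "proj A ` J \<subseteq> K" by (rule has_avoidanceE[OF avA])
  have "proj (A \<union> B) j \<in> K" if "j \<in> J" for j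
  proof -
    have "proj (A \<union> B) j = proj A j \<oplus>\<^bsub>P\<^esub> proj B j"
      using that J AB by (simp add: ideal.Icarr proj_Un)
    moreover have "proj A j \<in> K" "proj B j \<in> K" "ideal K P"
      using K that S(2) unfolding SB_def by blast+
    ultimately show ?thesis by (simp add: additive_subgroup.a_closed ideal.axioms(1))
  qed
  then show "\<exists>K\<in>S. proj (A \<union> B) ` J \<subseteq> K" using K(1) unfolding SB_def by blast
qed

lemma has_avoidance_proj_finite:
  assumes av: "\<And>i. i \<in> Idx \<Longrightarrow> avoidance_ring (R i)" and J: "ideal J P" and F: "finite F"
  shows "has_avoidance P (proj F ` J)"
  using F
proof (induction F rule: finite_induct)
  case empty
  have "\<zero>\<^bsub>P\<^esub> \<in> J" using J by (simp add: additive_subgroup.zero_closed ideal.axioms(1))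
  then have "proj {} ` J = {\<zero>\<^bsub>P\<^esub>}" by (auto simp: proj_empty)
  then show ?case by (intro has_avoidanceI) auto
next
  case (insert i F)
  show ?case
  proof (cases "i \<in> Idx")
    case True
    have "{i} \<inter> F = {}" using insert(2) by blast
    from has_avoidance_proj_Un[OF J this has_avoidance_proj_singleton[OF True av[OF True] J] insert(3)]
    show ?thesis by simp
  next
    case False
    then show ?thesis using insert(3) by (simp add: proj_insert_outside)
  qed
qed

lemma subset_by_finite_projs:
  assumes K: "ideal K P" and J: "J \<subseteq> carrier P"
    and projs: "\<And>F. finite F \<Longrightarrow> proj F ` J \<subseteq> K" and mod_D: "J \<subseteq> K <+>\<^bsub>P\<^esub> D"
  shows "J \<subseteq> K"
proof
  fix j assume j: "j \<in> J"
  then obtain k d where kd: "k \<in> K" "d \<in> D" "j = k \<oplus>\<^bsub>P\<^esub> d"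
    using mod_D unfolding set_add_def' by blast
  have carr: "k \<in> carrier P" "d \<in> carrier P"
    using kd K ideal_direct_sum by (auto simp: ideal.Icarr)
  define F where "F = {i \<in> Idx. d i \<noteq> \<zero>\<^bsub>R i\<^esub>}"
  have "finite F" using kd(2) unfolding F_def direct_sum_ideal_def by blast
  have "proj F j = proj F k \<oplus>\<^bsub>P\<^esub> d"
    using kd(3) proj_add[OF carr] proj_support[OF kd(2)] unfolding F_def by simp
  then have "d = \<ominus>\<^bsub>P\<^esub> proj F k \<oplus>\<^bsub>P\<^esub> proj F j"
    using P.r_neg1[OF proj_carrier[OF carr(1)] carr(2)] by simp
  moreover have "proj F j \<in> K" using projs[OF \<open>finite F\<close>] j by blast
  moreover have "proj F k \<in> K" using proj_in_ideal[OF K kd(1)] .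
  ultimately have "d \<in> K" using K
    by (simp add: additive_subgroup.a_closed additive_subgroup.a_inv_closed ideal.axioms(1))
  then show "j \<in> K" using kd K by (simp add: additive_subgroup.a_closed ideal.axioms(1))
qed

lemma avoidance_ring_prod_if_Quot:
  assumes av: "\<And>i. i \<in> Idx \<Longrightarrow> avoidance_ring (R i)" and avQ: "avoidance_ring (P Quot D)"
  shows "avoidance_ring P"
  unfolding avoidance_ring_def
proof (intro allI impI has_avoidanceI)
  fix J S assume J: "ideal J P" and S: "finite S" "\<forall>K\<in>S. ideal K P" and cover: "J \<subseteq> \<Union>S"
  have Jc: "J \<subseteq> carrier P" using J by (simp add: ideal.Icarr subsetI)
  define T where "T F = {K \<in> S. proj F ` J \<subseteq> K}" for F
  have T_sub: "T F \<subseteq> S" for F unfolding T_def by blast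
  have T_anti: "T G \<subseteq> T F" if "F \<subseteq> G" for F G
    using proj_image_antimono[OF that] S(2) unfolding T_def by blast
  obtain F0 where F0: "finite F0" and stable: "\<And>F. finite F \<Longrightarrow> T F0 \<subseteq> T F"
    using finite_sets_antimono_stabilize[OF S(1) T_sub T_anti] by meson
  have proj_id: "proj (- F0 \<union> F0) j = j" if "j \<in> J" for j
    using proj_UNIV[of j] that Jc by (auto simp: Compl_partition2)
  have cover_mod_D: "J \<subseteq> (\<Union>K\<in>T F0. K <+>\<^bsub>P\<^esub> D)"
  proof
    fix j assume j: "j \<in> J"
    have "proj (- F0 \<union> F0) ` J \<subseteq> \<Union>S" using cover proj_id by auto
    then obtain K where K: "K \<in> S" "proj (- F0) j \<in> K" "proj F0 ` J \<subseteq> K"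
      using proj_cover_split[OF J _ has_avoidance_proj_finite[OF av J F0] S _ j] by blast
    have "j = proj (- F0) j \<oplus>\<^bsub>P\<^esub> proj F0 j"
      using proj_Un[of j "- F0" F0] proj_id[OF j] j Jc by auto
    moreover have "proj F0 j \<in> D" using proj_finite_in_direct_sum[OF F0] j Jc by blast
    ultimately have "j \<in> K <+>\<^bsub>P\<^esub> D" using K(2) unfolding set_add_def' by blast
    then show "j \<in> (\<Union>K\<in>T F0. K <+>\<^bsub>P\<^esub> D)" using K unfolding T_def by blast
  qed
  have "finite (T F0)" "\<forall>K\<in>T F0. ideal K P" using S unfolding T_def by simp_all
  then obtain K where K: "K \<in> T F0" "J \<subseteq> K <+>\<^bsub>P\<^esub> D"
    using P.avoidance_modulo_ideal[OF ideal_direct_sum avQ J _ _ cover_mod_D] by blast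
  have "ideal K P" using K(1) S(2) unfolding T_def by blast
  moreover have "proj F ` J \<subseteq> K" if "finite F" for F
    using stable[OF that] K(1) unfolding T_def by blast
  ultimately have "J \<subseteq> K" using subset_by_finite_projs[OF _ Jc _ K(2)] by blast
  then show "\<exists>K\<in>S. J \<subseteq> K" using K(1) unfolding T_def by blast
qed

end

theorem corollary3p12:
  fixes Idx :: "'i set" and R :: "'i \<Rightarrow> ('a, 'b) ring_scheme"
  assumes "\<And>i. i \<in> Idx \<Longrightarrow> cring (R i)"
    and "\<And>i. i \<in> Idx \<Longrightarrow> \<one>\<^bsub>R i\<^esub> \<noteq> \<zero>\<^bsub>R i\<^esub>"
    and "\<And>i. i \<in> Idx \<Longrightarrow> avoidance_ring (R i)"
  shows "avoidance_ring (prod_ring Idx R) \<longleftrightarrow>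
         avoidance_ring (prod_ring Idx R Quot direct_sum_ideal Idx R)"
proof -
  interpret cring_family Idx R by (rule cring_family.intro[OF assms(1)])
  show ?thesis
    using avoidance_ring_Quot[OF P.ring_axioms ideal_direct_sum]
      avoidance_ring_prod_if_Quot[OF assms(3)] by blast
qed

end
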